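(* Let $q:V\to\overline K/\overline R$ be a non-trivial generalized $(\sigma,\varepsilon)$-quadratic form with sesquilinearization $f$ such that $P_q$ spans $\mathrm{PG}(V)$, and let $U\subseteq\mathrm{Rad}(f)$ be a subspace with $U\cap\mathrm{Rad}(q)=\{0\}$. Then $q_U:V/U\to\overline K/\overline R_U$ is a well-defined generalized $(\sigma,\varepsilon)$-quadratic form with sesquilinearization $f_U$, and, with $\pi_U:V\to V/U$ the projection: (1) if $q_U$ is non-trivial, $\pi_U$ induces an isomorphism of point-line geometries from $S_q$ onto $S_{q_U}$; (2) if $q_U$ is trivial, then both $f$ and $f_U$ are alternating and $\pi_U$ induces an isomorphism from $S_q$ onto the polar space $S_{f_U}$.
   Context: $K$ division ring, $(\sigma,\varepsilon)$ admissible pair ($\sigma$ anti-automorphism, $\varepsilon^\sigma\varepsilon=1$, $t^{\sigma^2}=\varepsilon t\varepsilon^{-1}$). $K_{\sigma,\varepsilon}=\{t-t^\sigma\varepsilon\}$, $K^{\sigma,\varepsilon}=\{t:t=-t^\sigma\varepsilon\}$, $\overline K=K/K_{\sigma,\varepsilon}$, $\bar t$ class of $t$, $\bar t\circ\lambda=\overline{\lambda^\sigma t\lambda}$, $\overline K^\circ=K^{\sigma,\varepsilon}/K_{\sigma,\varepsilon}$ (a right $K$-vector space under $\circ$); closed subgroups: stable under all $\circ\lambda$; $(\bar t+\overline R)\circ\lambda=\bar t\circ\lambda+\overline R$. Generalized $(\sigma,\varepsilon)$-quadratic form with co-defect closed $\overline R$: $q:V\to\overline K/\overline R$ ($V$ right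 $K$-vector space) with $q(x\lambda)=q(x)\circ\lambda$ and trace-valued $(\sigma,\varepsilon)$-sesquilinear $f$ ($f(x\lambda,y\mu)=\lambda^\sigma f(x,y)\mu$, $f(y,x)=f(x,y)^\sigma\varepsilon$, $f(x,x)\in\{t+t^\sigma\varepsilon\}$) with $q(x+y)=q(x)+q(y)+(\overline{f(x,y)}+\overline R)$. For non-trivial $q$, $\overline R$ is a subspace of $\overline K^\circ$ and $q$ restricted to $\mathrm{Rad}(f)=\{x:f(x,V)=0\}$ is $K$-linear into $\overline K^\circ/\overline R$ with kernel $\mathrm{Rad}(q)=\{x\in\mathrm{Rad}(f):q(x)=\overline R\}$. Given $U$ as in the claim, $\overline R_U$ is the unique subspace of $\overline K^\circ$ containing $\overline R$ with $\overline R_U/\overline R=q(U)$; $q_U(x+U)=\bar t+\overline R_U$ where $\bar t+\overline R=q(x)$; $f_U(x+U,y+U)=f(x,y)$. Trivial: identically zero in the quotient. $S_q$ ($S_{q_U}$): points of the projective space represented by singular vectors and lines all of whose points are singular; $S_{f_U}$: points $[v]$ with $f_U(v,v)=0$ and lines on which $f_U$ vanishes identically. Alternating: $f(x,x)=0$ for all $x$. *)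

theory Defs
  imports Main
begin

definition anti_automorphism :: "('k::division_ring \<Rightarrow> 'k) \<Rightarrow> bool" where
  "anti_automorphism \<sigma> \<longleftrightarrow> bij \<sigma> \<and> (\<forall>a b. \<sigma> (a + b) = \<sigma> a + \<sigma> b) \<and>
     (\<forall>a b. \<sigma> (a * b) = \<sigma> b * \<sigma> a)"

definition admissible :: "('k::division_ring \<Rightarrow> 'k) \<Rightarrow> 'k \<Rightarrow> bool" where
  "admissible \<sigma> \<epsilon> \<longleftrightarrow> anti_automorphism \<sigma> \<and> \<sigma> \<epsilon> * \<epsilon> = 1 \<and>
     (\<forall>t. \<sigma> (\<sigma> t) = \<epsilon> * t * inverse \<epsilon>)"

definition Kse :: "('k::division_ring \<Rightarrow> 'k) \<Rightarrow> 'k \<Rightarrow> 'k set" where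
  "Kse \<sigma> \<epsilon> = {t - \<sigma> t * \<epsilon> | t. True}"

definition Kfix :: "('k::division_ring \<Rightarrow> 'k) \<Rightarrow> 'k \<Rightarrow> 'k set" where
  "Kfix \<sigma> \<epsilon> = {t. t = - (\<sigma> t * \<epsilon>)}"

text \<open>A subgroup of Kbar = K/K_{sigma,eps} is represented by its preimage R in K
  (an additive subgroup of K containing K_{sigma,eps}); it is closed iff stable under
  t \<mapsto> lambda^sigma t lambda.  Elements of Kbar/Rbar are represented as cosets t + R.\<close>
definition closed_sub :: "('k::division_ring \<Rightarrow> 'k) \<Rightarrow> 'k \<Rightarrow> 'k set \<Rightarrow> bool" where
  "closed_sub \<sigma> \<epsilon> R \<longleftrightarrow> 0 \<in> R \<and> (\<forall>a\<in>R. \<forall>b\<in>R. a + b \<in> R) \<and> (\<forall>a\<in>R. - a \<in> R) \<and>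
     Kse \<sigma> \<epsilon> \<subseteq> R \<and> (\<forall>t\<in>R. \<forall>l. \<sigma> l * t * l \<in> R)"

definition cos :: "'k::division_ring set \<Rightarrow> 'k \<Rightarrow> 'k set" where
  "cos R t = (\<lambda>r. t + r) ` R"

section \<open>Right vector spaces (carrier based, so quotients can be formed)\<close>

record ('v, 'k) vs =
  vcarrier :: "'v set"
  vadd :: "'v \<Rightarrow> 'v \<Rightarrow> 'v"
  vzero :: 'v
  vsmul :: "'v \<Rightarrow> 'k \<Rightarrow> 'v"

definition rvs :: "('v, 'k::division_ring) vs \<Rightarrow> bool" where
  "rvs W \<longleftrightarrow>
    (let C = vcarrier W; ad = vadd W; z = vzero W; sm = vsmul W in
      z \<in> C \<and> (\<forall>x\<in>C. \<forall>y\<in>C. ad x y \<in> C) \<and> (\<forall>x\<in>C. \<forall>a. sm x a \<in> C) \<and>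
      (\<forall>x\<in>C. \<forall>y\<in>C. \<forall>w\<in>C. ad (ad x y) w = ad x (ad y w)) \<and>
      (\<forall>x\<in>C. \<forall>y\<in>C. ad x y = ad y x) \<and>
      (\<forall>x\<in>C. ad z x = x) \<and>
      (\<forall>x\<in>C. \<exists>y\<in>C. ad x y = z) \<and>
      (\<forall>x\<in>C. \<forall>a b. sm x (a + b) = ad (sm x a) (sm x b)) \<and>
      (\<forall>x\<in>C. \<forall>y\<in>C. \<forall>a. sm (ad x y) a = ad (sm x a) (sm y a)) \<and>
      (\<forall>x\<in>C. \<forall>a b. sm (sm x a) b = sm x (a * b)) \<and>
      (\<forall>x\<in>C. sm x 1 = x))"

definition subspace :: "('v, 'k::division_ring) vs \<Rightarrow> 'v set \<Rightarrow> bool" where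
  "subspace W X \<longleftrightarrow> X \<subseteq> vcarrier W \<and> vzero W \<in> X \<and>
     (\<forall>x\<in>X. \<forall>y\<in>X. vadd W x y \<in> X) \<and> (\<forall>x\<in>X. \<forall>a. vsmul W x a \<in> X)"

definition span :: "('v, 'k::division_ring) vs \<Rightarrow> 'v set \<Rightarrow> 'v set" where
  "span W S = \<Inter> {X. subspace W X \<and> S \<subseteq> X}"

definition points :: "('v, 'k::division_ring) vs \<Rightarrow> 'v set set" where
  "points W = {span W {x} | x. x \<in> vcarrier W \<and> x \<noteq> vzero W}"

definition lines :: "('v, 'k::division_ring) vs \<Rightarrow> 'v set set" where
  "lines W = {span W {x, y} | x y. x \<in> vcarrier W \<and> y \<in> vcarrier W \<and>
                 x \<noteq> vzero W \<and> y \<notin> span W {x}}"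

definition trace_valued_sesq ::
  "('v, 'k::division_ring) vs \<Rightarrow> ('k \<Rightarrow> 'k) \<Rightarrow> 'k \<Rightarrow> ('v \<Rightarrow> 'v \<Rightarrow> 'k) \<Rightarrow> bool" where
  "trace_valued_sesq W \<sigma> \<epsilon> f \<longleftrightarrow>
    (let C = vcarrier W in
     (\<forall>x\<in>C. \<forall>y\<in>C. \<forall>z\<in>C. f (vadd W x y) z = f x z + f y z) \<and>
     (\<forall>x\<in>C. \<forall>y\<in>C. \<forall>z\<in>C. f x (vadd W y z) = f x y + f x z) \<and>
     (\<forall>x\<in>C. \<forall>y\<in>C. \<forall>a b. f (vsmul W x a) (vsmul W y b) = \<sigma> a * f x y * b) \<and>
     (\<forall>x\<in>C. \<forall>y\<in>C. f y x = \<sigma> (f x y) * \<epsilon>) \<and>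
     (\<forall>x\<in>C. \<exists>t. f x x = t + \<sigma> t * \<epsilon>))"

text \<open>Generalized (sigma,eps)-quadratic form q : V -> Kbar/Rbar with co-defect the closed
  subgroup represented by R, and sesquilinearization f.\<close>
definition gen_quad_form ::
  "('v, 'k::division_ring) vs \<Rightarrow> ('k \<Rightarrow> 'k) \<Rightarrow> 'k \<Rightarrow> 'k set \<Rightarrow> ('v \<Rightarrow> 'k set)
     \<Rightarrow> ('v \<Rightarrow> 'v \<Rightarrow> 'k) \<Rightarrow> bool" where
  "gen_quad_form W \<sigma> \<epsilon> R q f \<longleftrightarrow>
    rvs W \<and> admissible \<sigma> \<epsilon> \<and> closed_sub \<sigma> \<epsilon> R \<and> trace_valued_sesq W \<sigma> \<epsilon> f \<and>
    (\<forall>x\<in>vcarrier W. \<exists>t. q x = cos R t) \<and>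
    (\<forall>x\<in>vcarrier W. \<forall>l. \<forall>t\<in>q x. q (vsmul W x l) = cos R (\<sigma> l * t * l)) \<and>
    (\<forall>x\<in>vcarrier W. \<forall>y\<in>vcarrier W. \<forall>t\<in>q x. \<forall>s\<in>q y.
        q (vadd W x y) = cos R (t + s + f x y))"

definition qtrivial :: "('v, 'k) vs \<Rightarrow> 'k set \<Rightarrow> ('v \<Rightarrow> 'k set) \<Rightarrow> bool" where
  "qtrivial W R q \<longleftrightarrow> (\<forall>x\<in>vcarrier W. q x = R)"

definition alternating :: "('v, 'k::division_ring) vs \<Rightarrow> ('v \<Rightarrow> 'v \<Rightarrow> 'k) \<Rightarrow> bool" where
  "alternating W f \<longleftrightarrow> (\<forall>x\<in>vcarrier W. f x x = 0)"

definition Radf :: "('v, 'k::division_ring) vs \<Rightarrow> ('v \<Rightarrow> 'v \<Rightarrow> 'k) \<Rightarrow> 'v set" where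
  "Radf W f = {x \<in> vcarrier W. \<forall>y\<in>vcarrier W. f x y = 0}"

definition Radq :: "('v, 'k::division_ring) vs \<Rightarrow> 'k set \<Rightarrow> ('v \<Rightarrow> 'k set)
     \<Rightarrow> ('v \<Rightarrow> 'v \<Rightarrow> 'k) \<Rightarrow> 'v set" where
  "Radq W R q f = {x \<in> Radf W f. q x = R}"

definition sing_points :: "('v, 'k::division_ring) vs \<Rightarrow> 'k set \<Rightarrow> ('v \<Rightarrow> 'k set) \<Rightarrow> 'v set set" where
  "sing_points W R q = {span W {x} | x. x \<in> vcarrier W \<and> x \<noteq> vzero W \<and> q x = R}"

definition sing_lines :: "('v, 'k::division_ring) vs \<Rightarrow> 'k set \<Rightarrow> ('v \<Rightarrow> 'k set) \<Rightarrow> 'v set set" where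
  "sing_lines W R q = {L \<in> lines W. \<forall>p\<in>points W. p \<subseteq> L \<longrightarrow> p \<in> sing_points W R q}"

definition S_q :: "('v, 'k::division_ring) vs \<Rightarrow> 'k set \<Rightarrow> ('v \<Rightarrow> 'k set) \<Rightarrow> 'v set set \<times> 'v set set" where
  "S_q W R q = (sing_points W R q, sing_lines W R q)"

definition S_f :: "('v, 'k::division_ring) vs \<Rightarrow> ('v \<Rightarrow> 'v \<Rightarrow> 'k) \<Rightarrow> 'v set set \<times> 'v set set" where
  "S_f W f = ({span W {v} | v. v \<in> vcarrier W \<and> v \<noteq> vzero W \<and> f v v = 0},
              {L \<in> lines W. \<forall>x\<in>L. \<forall>y\<in>L. f x y = 0})"

text \<open>An isomorphism of point-line geometries (incidence = containment) given by a map phi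
  on subspaces.\<close>
definition geom_iso :: "('a set \<Rightarrow> 'b set) \<Rightarrow> 'a set set \<times> 'a set set \<Rightarrow> 'b set set \<times> 'b set set \<Rightarrow> bool" where
  "geom_iso \<phi> G H \<longleftrightarrow> bij_betw \<phi> (fst G) (fst H) \<and> bij_betw \<phi> (snd G) (snd H) \<and>
     (\<forall>p\<in>fst G. \<forall>L\<in>snd G. p \<subseteq> L \<longleftrightarrow> \<phi> p \<subseteq> \<phi> L)"

definition coset :: "('v, 'k) vs \<Rightarrow> 'v set \<Rightarrow> 'v \<Rightarrow> 'v set" where
  "coset W U x = (\<lambda>u. vadd W x u) ` U"

definition quot :: "('v, 'k) vs \<Rightarrow> 'v set \<Rightarrow> ('v set, 'k) vs" where
  "quot W U = \<lparr> vcarrier = coset W U ` vcarrier W,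
               vadd = (\<lambda>C D. {vadd W c d | c d. c \<in> C \<and> d \<in> D}),
               vzero = U,
               vsmul = (\<lambda>C a. {vadd W (vsmul W c a) u | c u. c \<in> C \<and> u \<in> U}) \<rparr>"

text \<open>Rbar_U represented by its preimage in K: the union of the cosets q(u), u in U.\<close>
definition R_U :: "'v set \<Rightarrow> ('v \<Rightarrow> 'k set) \<Rightarrow> 'k set" where
  "R_U U q = \<Union> (q ` U)"

definition q_U :: "'v set \<Rightarrow> ('v \<Rightarrow> 'k::division_ring set) \<Rightarrow> 'v set \<Rightarrow> 'k set" where
  "q_U U q C = cos (R_U U q) (SOME t. \<exists>x\<in>C. t \<in> q x)"

definition f_U :: "('v \<Rightarrow> 'v \<Rightarrow> 'k) \<Rightarrow> 'v set \<Rightarrow> 'v set \<Rightarrow> 'k" where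
  "f_U f C D = f (SOME x. x \<in> C) (SOME y. y \<in> D)"

end

theory Submission
  imports Defs
begin

text \<open>
  Since \<open>f\<close> ignores \<open>U\<close>, the value \<open>q(x + u)\<close>
  is \<open>q(x) + q(u)\<close>; hence \<open>q_U\<close> and \<open>f_U\<close> are well defined on \<open>V/U\<close> and form a generalized
  quadratic form with co-defect \<open>R_U\<close>.  The heart of the argument is that the projection
  \<open>\<pi>_U\<close> restricts to a bijection between the singular vectors of \<open>q\<close> and those of \<open>q_U\<close>:
  it is injective because a coset \<open>x + U\<close> holding two singular vectors would force a non-zero
  singular vector in \<open>U \<subseteq> Rad(f)\<close>, and surjective because if \<open>q(x) \<in> q(u) + R\<close> then
  \<open>x - u\<close> is singular.  Consequently \<open>\<pi>_U\<close> maps \<open>S_q\<close> isomorphically onto its image, and the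
  image consists of the points of \<open>q_U\<close> and of the lines of singular vectors on which
  \<open>f_U\<close> vanishes.  If \<open>q_U\<close> is non-trivial these are exactly the singular lines of \<open>q_U\<close>;
  if \<open>q_U\<close> is trivial every vector is singular modulo \<open>U\<close>, so \<open>f\<close> and \<open>f_U\<close> are
  alternating and the image is the polar space of \<open>f_U\<close>.
\<close>

section \<open>Right vector spaces\<close>

locale right_vs =
  fixes W :: "('v, 'k::division_ring) vs"
  assumes rvs: "rvs W"
begin

abbreviation "V \<equiv> vcarrier W"
abbreviation "plusv \<equiv> vadd W"
abbreviation "zerov \<equiv> vzero W"
abbreviation "smulv \<equiv> vsmul W"

lemmas vs_laws = rvs[unfolded rvs_def Let_def]

lemma zero_in [simp]: "zerov \<in> V"
  using vs_laws by auto
lemma plus_in [simp]: "x \<in> V \<Longrightarrow> y \<in> V \<Longrightarrow> plusv x y \<in> V"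
  using vs_laws by auto
lemma smul_in [simp]: "x \<in> V \<Longrightarrow> smulv x a \<in> V"
  using vs_laws by auto
lemma plus_assoc: "x \<in> V \<Longrightarrow> y \<in> V \<Longrightarrow> z \<in> V \<Longrightarrow> plusv (plusv x y) z = plusv x (plusv y z)"
  using vs_laws by auto
lemma plus_comm: "x \<in> V \<Longrightarrow> y \<in> V \<Longrightarrow> plusv x y = plusv y x"
  using vs_laws by auto
lemma zero_plus [simp]: "x \<in> V \<Longrightarrow> plusv zerov x = x"
  using vs_laws by auto
lemma neg_exists: "x \<in> V \<Longrightarrow> \<exists>y\<in>V. plusv x y = zerov"
  using vs_laws by meson
lemma smul_plus_scalar: "x \<in> V \<Longrightarrow> smulv x (a + b) = plusv (smulv x a) (smulv x b)"
  using vs_laws by auto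
lemma smul_plus_vector: "x \<in> V \<Longrightarrow> y \<in> V \<Longrightarrow> smulv (plusv x y) a = plusv (smulv x a) (smulv y a)"
  using vs_laws by auto
lemma smul_smul [simp]: "x \<in> V \<Longrightarrow> smulv (smulv x a) b = smulv x (a * b)"
  using vs_laws by auto
lemma smul_one [simp]: "x \<in> V \<Longrightarrow> smulv x 1 = x"
  using vs_laws by auto

lemma plus_zero [simp]: "x \<in> V \<Longrightarrow> plusv x zerov = x"
  using plus_comm zero_plus zero_in by metis

lemma plus_cancel_left:
  assumes "x \<in> V" "y \<in> V" "z \<in> V" "plusv x y = plusv x z"
  shows "y = z"
proof -
  obtain n where n: "n \<in> V" "plusv n x = zerov"
    using neg_exists assms(1) plus_comm by metis
  have "plusv (plusv n x) y = plusv (plusv n x) z"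
    using assms n(1) by (simp add: plus_assoc)
  then show ?thesis
    using assms n by simp
qed

lemma smul_zero_scalar [simp]: "x \<in> V \<Longrightarrow> smulv x 0 = zerov"
  using smul_plus_scalar[of x 0 0] plus_cancel_left[of "smulv x 0" "smulv x 0" zerov] by simp

lemma plus_smul_minus_one: "x \<in> V \<Longrightarrow> plusv x (smulv x (-1)) = zerov"
  by (metis smul_plus_scalar smul_one smul_zero_scalar add.right_inverse)

lemma span_eqI:
  assumes "subspace W S" "T \<subseteq> S" "\<And>X. subspace W X \<Longrightarrow> T \<subseteq> X \<Longrightarrow> S \<subseteq> X"
  shows "span W T = S"
  using assms unfolding span_def by blast

lemma span_least: "subspace W X \<Longrightarrow> T \<subseteq> X \<Longrightarrow> span W T \<subseteq> X"
  unfolding span_def by blast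

lemma span_superset: "T \<subseteq> span W T"
  unfolding span_def by blast

lemma span_subspace:
  assumes "T \<subseteq> V"
  shows "subspace W (span W T)"
proof -
  have "V \<in> {X. subspace W X \<and> T \<subseteq> X}"
    using assms unfolding subspace_def by auto
  then show ?thesis
    unfolding subspace_def span_def by blast
qed

lemma span_single:
  assumes "x \<in> V"
  shows "span W {x} = {smulv x a | a. True}"
proof (rule span_eqI)
  show "subspace W {smulv x a | a. True}"
    unfolding subspace_def using assms
    by (auto simp: smul_plus_scalar[symmetric] intro: exI[of _ 0])
  show "{x} \<subseteq> {smulv x a | a. True}"
    using assms by (auto intro: exI[of _ 1])
qed (auto simp: subspace_def)

lemma span_pair:
  assumes "x \<in> V" "y \<in> V"
  shows "span W {x, y} = {plusv (smulv x a) (smulv y b) | a b. True}"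
    (is "_ = ?S")
proof (rule span_eqI)
  have closed_plus: "plusv (plusv (smulv x a) (smulv y b)) (plusv (smulv x c) (smulv y d))
      = plusv (smulv x (a + c)) (smulv y (b + d))" for a b c d
    using assms by (simp add: smul_plus_scalar plus_assoc) (metis plus_assoc plus_comm smul_in)
  show "subspace W ?S"
    unfolding subspace_def
  proof (intro conjI ballI allI)
    show "?S \<subseteq> V" "zerov \<in> ?S"
      using assms by (auto intro!: exI[of _ 0])
    fix v w e assume "v \<in> ?S" "w \<in> ?S"
    then obtain a b c d where v: "v = plusv (smulv x a) (smulv y b)"
      and w: "w = plusv (smulv x c) (smulv y d)" by blast
    show "plusv v w \<in> ?S" unfolding v w closed_plus by blast
    have "smulv v e = plusv (smulv x (a * e)) (smulv y (b * e))"
      unfolding v using assms by (simp add: smul_plus_vector)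
    then show "smulv v e \<in> ?S" by blast
  qed
  have "x = plusv (smulv x 1) (smulv y 0)" "y = plusv (smulv x 0) (smulv y 1)"
    using assms by auto
  then show "{x, y} \<subseteq> ?S" by blast
qed (auto simp: subspace_def)

lemma lines_subspace: "L \<in> lines W \<Longrightarrow> subspace W L"
  unfolding lines_def using span_subspace by auto

lemma subspace_carrier: "subspace W S \<Longrightarrow> S \<subseteq> V"
  unfolding subspace_def by blast

end

section \<open>The quotient space \<open>V/U\<close>\<close>

locale vs_quotient = right_vs W for W :: "('v, 'k::division_ring) vs" +
  fixes U :: "'v set"
  assumes U_subspace: "subspace W U"
begin

abbreviation "proj \<equiv> coset W U"

lemma U_carrier [simp]: "u \<in> U \<Longrightarrow> u \<in> V"
  and U_zero [simp]: "zerov \<in> U"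
  and U_plus [simp]: "u \<in> U \<Longrightarrow> v \<in> U \<Longrightarrow> plusv u v \<in> U"
  and U_smul [simp]: "u \<in> U \<Longrightarrow> smulv u a \<in> U"
  using U_subspace unfolding subspace_def by blast+

lemma coset_self: "x \<in> V \<Longrightarrow> x \<in> proj x"
  unfolding coset_def by (rule image_eqI[of _ _ zerov]) auto

lemma coset_shift:
  assumes "x \<in> V" "u \<in> U"
  shows "proj (plusv x u) = proj x"
proof
  show "proj (plusv x u) \<subseteq> proj x"
    unfolding coset_def using assms by (auto simp: plus_assoc)
  show "proj x \<subseteq> proj (plusv x u)"
  proof
    fix y assume "y \<in> proj x"
    then obtain v where v: "v \<in> U" "y = plusv x v"
      unfolding coset_def by blast
    have "plusv (plusv x u) (plusv (smulv u (-1)) v) = plusv x (plusv (plusv u (smulv u (-1))) v)"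
      using assms v by (simp add: plus_assoc)
    also have "\<dots> = y"
      using assms v by (simp add: plus_smul_minus_one)
    finally show "y \<in> proj (plusv x u)"
      unfolding coset_def using assms v by (metis U_plus U_smul image_eqI)
  qed
qed

lemma coset_eq_iff:
  assumes "x \<in> V" "y \<in> V"
  shows "proj x = proj y \<longleftrightarrow> (\<exists>u\<in>U. x = plusv y u)"
proof
  assume "proj x = proj y"
  then have "x \<in> proj y"
    using coset_self assms by blast
  then show "\<exists>u\<in>U. x = plusv y u"
    unfolding coset_def by blast
qed (use coset_shift assms in blast)

lemma coset_zero: "proj zerov = U"
  unfolding coset_def by (auto intro: image_eqI)

lemma quot_carrier [simp]: "vcarrier (quot W U) = proj ` V"
  and quot_zero [simp]: "vzero (quot W U) = U"
  unfolding quot_def by simp_all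

lemma quot_plus:
  assumes "x \<in> V" "y \<in> V"
  shows "vadd (quot W U) (proj x) (proj y) = proj (plusv x y)"
proof -
  have "{plusv c d |c d. c \<in> proj x \<and> d \<in> proj y} = proj (plusv x y)"
  proof
    show "{plusv c d |c d. c \<in> proj x \<and> d \<in> proj y} \<subseteq> proj (plusv x y)"
    proof
      fix w assume "w \<in> {plusv c d |c d. c \<in> proj x \<and> d \<in> proj y}"
      then obtain u v where uv: "u \<in> U" "v \<in> U" "w = plusv (plusv x u) (plusv y v)"
        unfolding coset_def by blast
      have "w = plusv (plusv x y) (plusv u v)"
        using uv assms by (simp add: plus_assoc) (metis plus_assoc plus_comm U_carrier)
      then show "w \<in> proj (plusv x y)"
        unfolding coset_def using uv by auto
    qed
    show "proj (plusv x y) \<subseteq> {plusv c d |c d. c \<in> proj x \<and> d \<in> proj y}"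
    proof
      fix w assume "w \<in> proj (plusv x y)"
      then obtain u where u: "u \<in> U" "w = plusv x (plusv y u)"
        unfolding coset_def using assms by (auto simp: plus_assoc)
      moreover have "plusv y u \<in> proj y"
        unfolding coset_def using u by blast
      ultimately show "w \<in> {plusv c d |c d. c \<in> proj x \<and> d \<in> proj y}"
        using coset_self assms by blast
    qed
  qed
  then show ?thesis unfolding quot_def by simp
qed

lemma quot_smul:
  assumes "x \<in> V"
  shows "vsmul (quot W U) (proj x) a = proj (smulv x a)"
proof -
  have "{plusv (smulv c a) u |c u. c \<in> proj x \<and> u \<in> U} = proj (smulv x a)"
  proof
    show "{plusv (smulv c a) u |c u. c \<in> proj x \<and> u \<in> U} \<subseteq> proj (smulv x a)"
    proof
      fix w assume "w \<in> {plusv (smulv c a) u |c u. c \<in> proj x \<and> u \<in> U}"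
      then obtain u v where uv: "u \<in> U" "v \<in> U" "w = plusv (smulv (plusv x u) a) v"
        unfolding coset_def by blast
      have "w = plusv (smulv x a) (plusv (smulv u a) v)"
        using uv assms by (simp add: plus_assoc smul_plus_vector)
      then show "w \<in> proj (smulv x a)"
        unfolding coset_def using uv by auto
    qed
    show "proj (smulv x a) \<subseteq> {plusv (smulv c a) u |c u. c \<in> proj x \<and> u \<in> U}"
      unfolding coset_def using coset_self[OF assms] unfolding coset_def by blast
  qed
  then show ?thesis unfolding quot_def by simp
qed

lemma rvs_quot: "rvs (quot W U)"
proof -
  have ball_proj: "(\<forall>X\<in>proj ` V. P X) \<longleftrightarrow> (\<forall>x\<in>V. P (proj x))"
    and bex_proj: "(\<exists>X\<in>proj ` V. P X) \<longleftrightarrow> (\<exists>x\<in>V. P (proj x))" for P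
    by blast+
  have zero: "U \<in> proj ` V"
    using coset_zero zero_in by (metis image_eqI)
  have zero_plus: "vadd (quot W U) U (proj x) = proj x" if "x \<in> V" for x
    using that quot_plus[of zerov x] coset_zero by simp
  have comm: "vadd (quot W U) (proj x) (proj y) = vadd (quot W U) (proj y) (proj x)"
    if "x \<in> V" "y \<in> V" for x y
    using that by (simp add: quot_plus plus_comm)
  have neg: "\<exists>y\<in>V. vadd (quot W U) (proj x) (proj y) = U" if "x \<in> V" for x
    using that quot_plus[of x "smulv x (-1)"] plus_smul_minus_one coset_zero smul_in by metis
  show ?thesis
    unfolding rvs_def Let_def quot_carrier quot_zero ball_proj bex_proj
    using zero zero_plus comm neg
    by (simp add: quot_plus quot_smul plus_assoc smul_plus_scalar smul_plus_vector)
qed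

end

sublocale vs_quotient \<subseteq> Q: right_vs "quot W U"
  by (rule right_vs.intro, rule rvs_quot)

context vs_quotient
begin

lemma proj_span_single:
  assumes "x \<in> V"
  shows "proj ` span W {x} = span (quot W U) {proj x}"
  using assms by (auto simp: span_single Q.span_single quot_smul)

lemma proj_span_pair:
  assumes "x \<in> V" "y \<in> V"
  shows "proj ` span W {x, y} = span (quot W U) {proj x, proj y}"
  using assms by (auto simp: span_pair Q.span_pair quot_smul quot_plus)

end

section \<open>Cosets in the division ring\<close>

definition add_subgroup :: "'a::ab_group_add set \<Rightarrow> bool" where
  "add_subgroup G \<longleftrightarrow> 0 \<in> G \<and> (\<forall>a\<in>G. \<forall>b\<in>G. a + b \<in> G) \<and> (\<forall>a\<in>G. - a \<in> G)"

lemma cos_mem_iff: "b \<in> cos G a \<longleftrightarrow> b - a \<in> G"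
  unfolding cos_def by (auto intro: image_eqI[of _ _ "b - a"])

lemma cos_eq_iff:
  assumes "add_subgroup G"
  shows "cos G a = cos G b \<longleftrightarrow> a - b \<in> G"
proof
  assume "cos G a = cos G b"
  moreover have "a \<in> cos G a"
    using assms unfolding cos_mem_iff add_subgroup_def by simp
  ultimately show "a - b \<in> G" by (simp add: cos_mem_iff)
next
  assume ab: "a - b \<in> G"
  have "c - b = (c - a) + (a - b)" "c - a = (c - b) + - (a - b)" for c
    by simp_all
  then show "cos G a = cos G b"
    using ab assms unfolding cos_mem_iff add_subgroup_def set_eq_iff by metis
qed

lemma cos_self: "add_subgroup G \<Longrightarrow> a \<in> cos G a"
  unfolding cos_mem_iff add_subgroup_def by simp

lemma cos_of_mem: "add_subgroup G \<Longrightarrow> b \<in> cos G a \<Longrightarrow> cos G a = cos G b"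
  by (simp add: cos_eq_iff cos_mem_iff add_subgroup_def)
    (metis add_subgroup_def minus_diff_eq)

lemma cos_eq_self_iff: "add_subgroup G \<Longrightarrow> cos G a = G \<longleftrightarrow> a \<in> G"
  using cos_eq_iff[of G a 0] by (simp add: cos_def)

lemma cos_zero: "cos G 0 = G"
  unfolding cos_def by simp

lemma cos_UNIV: "cos UNIV a = UNIV"
  unfolding cos_def by (auto intro: image_eqI[of _ _ "x - a" for x])

lemma closed_sub_add_subgroup: "closed_sub \<sigma> \<epsilon> R \<Longrightarrow> add_subgroup R"
  unfolding closed_sub_def add_subgroup_def by blast

text \<open>Addition and the action \<open>t \<mapsto> t\<^sup>\<sigma>\<lambda>\<close>-conjugation are compatible with cosets; this is
  what makes \<open>q_U\<close> satisfy the axioms of a quadratic form on \<open>V/U\<close>.\<close>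
lemma cos_cong_plus:
  assumes "add_subgroup G" "cos G a = cos G a'" "cos G b = cos G b'"
  shows "cos G (a + b + c) = cos G (a' + b' + c)"
proof -
  have "a - a' \<in> G" "b - b' \<in> G"
    using assms cos_eq_iff by blast+
  moreover have "(a + b + c) - (a' + b' + c) = (a - a') + (b - b')"
    by (simp add: algebra_simps)
  ultimately show ?thesis
    using assms(1) cos_eq_iff unfolding add_subgroup_def by metis
qed

lemma cos_cong_closed_mult:
  assumes "closed_sub \<sigma> \<epsilon> G" "cos G a = cos G b"
  shows "cos G (\<sigma> l * a * l) = cos G (\<sigma> l * b * l)"
proof -
  have G: "add_subgroup G"
    using assms(1) by (rule closed_sub_add_subgroup)
  then have "\<sigma> l * (a - b) * l \<in> G"
    using assms cos_eq_iff unfolding closed_sub_def by blast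
  moreover have "\<sigma> l * (a - b) * l = \<sigma> l * a * l - \<sigma> l * b * l"
    by (simp add: algebra_simps)
  ultimately show ?thesis
    using G cos_eq_iff by metis
qed

lemma right_multiples_in_proper_subgroup:
  fixes c :: "'k::division_ring"
  assumes "\<And>b. c * b \<in> G" "G \<noteq> UNIV"
  shows "c = 0"
proof (rule ccontr)
  assume "c \<noteq> 0"
  then have "c * (inverse c * k) = k" for k
    by (simp add: mult.assoc[symmetric])
  then have "k \<in> G" for k
    using assms(1) by metis
  then show False using assms(2) by blast
qed

lemma anti_automorphism_simps:
  assumes "anti_automorphism \<sigma>"
  shows "\<sigma> 0 = 0" "\<sigma> 1 = 1" "\<sigma> (- a) = - \<sigma> a"
proof -
  have add: "\<And>a b. \<sigma> (a + b) = \<sigma> a + \<sigma> b" and mul: "\<And>a b. \<sigma> (a * b) = \<sigma> b * \<sigma> a"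
    using assms unfolding anti_automorphism_def by auto
  show zero: "\<sigma> 0 = 0"
    using add[of 0 0] by simp
  show "\<sigma> (- a) = - \<sigma> a"
    using add[of a "- a"] zero by (simp add: add_eq_0_iff2)
  obtain c where c: "\<sigma> c = 1"
    using assms unfolding anti_automorphism_def bij_def by (metis surjD)
  have "\<sigma> c = \<sigma> 1 * \<sigma> c"
    using mul[of c 1] by simp
  then show "\<sigma> 1 = 1" using c by simp
qed

section \<open>Generalized quadratic forms\<close>

locale gen_quadratic =
  fixes W :: "('v, 'k::division_ring) vs" and \<sigma> :: "'k \<Rightarrow> 'k" and \<epsilon> :: 'k
    and R :: "'k set" and q :: "'v \<Rightarrow> 'k set" and f :: "'v \<Rightarrow> 'v \<Rightarrow> 'k"
  assumes gqf: "gen_quad_form W \<sigma> \<epsilon> R q f"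
begin

sublocale right_vs W
  using gqf by (simp add: gen_quad_form_def right_vs_def)

lemma admissible: "admissible \<sigma> \<epsilon>"
  and R_closed: "closed_sub \<sigma> \<epsilon> R"
  and f_sesq: "trace_valued_sesq W \<sigma> \<epsilon> f"
  using gqf unfolding gen_quad_form_def by blast+

lemma R_subgroup: "add_subgroup R"
  using R_closed by (rule closed_sub_add_subgroup)

lemmas \<sigma>_simps = anti_automorphism_simps[OF admissible[unfolded admissible_def, THEN conjunct1]]

lemma q_cos: "x \<in> V \<Longrightarrow> \<exists>t. q x = cos R t"
  and q_smul: "x \<in> V \<Longrightarrow> t \<in> q x \<Longrightarrow> q (smulv x l) = cos R (\<sigma> l * t * l)"
  and q_plus: "x \<in> V \<Longrightarrow> y \<in> V \<Longrightarrow> t \<in> q x \<Longrightarrow> s \<in> q y \<Longrightarrow> q (plusv x y) = cos R (t + s + f x y)"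
  using gqf unfolding gen_quad_form_def by blast+

lemma f_plus_left: "x \<in> V \<Longrightarrow> y \<in> V \<Longrightarrow> z \<in> V \<Longrightarrow> f (plusv x y) z = f x z + f y z"
  and f_plus_right: "x \<in> V \<Longrightarrow> y \<in> V \<Longrightarrow> z \<in> V \<Longrightarrow> f x (plusv y z) = f x y + f x z"
  and f_smul: "x \<in> V \<Longrightarrow> y \<in> V \<Longrightarrow> f (smulv x a) (smulv y b) = \<sigma> a * f x y * b"
  and f_hermitian: "x \<in> V \<Longrightarrow> y \<in> V \<Longrightarrow> f y x = \<sigma> (f x y) * \<epsilon>"
  and f_trace: "x \<in> V \<Longrightarrow> \<exists>t. f x x = t + \<sigma> t * \<epsilon>"
  using f_sesq unfolding trace_valued_sesq_def Let_def by blast+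

lemma q_eq_cos: "x \<in> V \<Longrightarrow> t \<in> q x \<Longrightarrow> q x = cos R t"
  using q_cos cos_of_mem R_subgroup by metis

lemma q_nonempty: "x \<in> V \<Longrightarrow> \<exists>t. t \<in> q x"
  using q_cos cos_self R_subgroup by metis

lemma singular_iff: "x \<in> V \<Longrightarrow> q x = R \<longleftrightarrow> 0 \<in> q x"
  using q_eq_cos cos_zero R_subgroup add_subgroup_def by metis

lemma q_zero: "q zerov = R"
proof -
  obtain t where "t \<in> q zerov"
    using q_nonempty zero_in by blast
  then have "q (smulv zerov 0) = cos R (\<sigma> 0 * t * 0)"
    using q_smul zero_in by blast
  then show ?thesis by (simp add: cos_zero)
qed

lemma singular_smul: "x \<in> V \<Longrightarrow> q x = R \<Longrightarrow> q (smulv x a) = R"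
  using q_smul[of x 0 a] singular_iff by (simp add: cos_zero)

text \<open>\<open>q(-x) = q(x)\<close>, as \<open>(-1)\<^sup>\<sigma> t (-1) = t\<close>.\<close>
lemma q_smul_minus_one: "x \<in> V \<Longrightarrow> q (smulv x (-1)) = q x"
  using q_nonempty q_smul[of x _ "-1"] q_eq_cos by (fastforce simp: \<sigma>_simps)

lemma singular_combination:
  assumes "x \<in> V" "y \<in> V" "q x = R" "q y = R"
  shows "q (plusv (smulv x a) (smulv y b)) = cos R (\<sigma> a * f x y * b)"
proof -
  have "0 \<in> q (smulv x a)" "0 \<in> q (smulv y b)"
    using singular_smul assms singular_iff by auto
  then have "q (plusv (smulv x a) (smulv y b)) = cos R (0 + 0 + f (smulv x a) (smulv y b))"
    using q_plus assms by simp
  then show ?thesis using f_smul assms by simp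
qed

lemma qtrivial_if_R_UNIV: "R = UNIV \<Longrightarrow> qtrivial W R q"
  unfolding qtrivial_def using q_cos cos_UNIV by metis

lemma f_vanishes_on_singular_subspace:
  assumes "subspace W S" "\<forall>v\<in>S. q v = R" "R \<noteq> UNIV" "x \<in> S" "y \<in> S"
  shows "f x y = 0"
proof (rule right_multiples_in_proper_subgroup[OF _ assms(3)])
  fix b
  have xy: "x \<in> V" "y \<in> V"
    using assms subspace_carrier by blast+
  then have "plusv (smulv x 1) (smulv y b) \<in> S"
    using assms unfolding subspace_def by simp
  then have "q (plusv (smulv x 1) (smulv y b)) = R"
    using assms by blast
  moreover have "q (plusv (smulv x 1) (smulv y b)) = cos R (f x y * b)"
    using singular_combination[of x y 1 b] assms xy by (simp add: \<sigma>_simps)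
  ultimately show "f x y * b \<in> R"
    using cos_eq_self_iff R_subgroup by metis
qed

lemma singular_isotropic:
  assumes "v \<in> V" "q v = R" "R \<noteq> UNIV"
  shows "f v v = 0"
proof (rule f_vanishes_on_singular_subspace[of "span W {v}"])
  show "subspace W (span W {v})"
    using assms by (simp add: span_subspace)
  show "\<forall>w\<in>span W {v}. q w = R"
    using assms by (auto simp: span_single singular_smul)
qed (use assms span_superset in auto)

lemma sing_points_singular:
  assumes "P \<in> sing_points W R q"
  shows "P \<subseteq> V" "\<forall>p\<in>P. q p = R"
  using assms span_subspace[of "{x}" for x] subspace_carrier
  by (auto simp: sing_points_def span_single singular_smul)

lemma sing_lines_iff: "L \<in> sing_lines W R q \<longleftrightarrow> L \<in> lines W \<and> (\<forall>l\<in>L. q l = R)"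
proof
  assume L: "L \<in> sing_lines W R q"
  then have line: "L \<in> lines W"
    unfolding sing_lines_def by blast
  have "q l = R" if l: "l \<in> L" for l
  proof (cases "l = zerov")
    case False
    have "l \<in> V"
      using l line lines_subspace subspace_carrier by blast
    then have "span W {l} \<in> points W" "span W {l} \<subseteq> L"
      using False l line lines_subspace span_least unfolding points_def by blast+
    then have "span W {l} \<in> sing_points W R q"
      using L unfolding sing_lines_def by blast
    then show ?thesis
      using sing_points_singular span_superset by blast
  qed (simp add: q_zero)
  then show "L \<in> lines W \<and> (\<forall>l\<in>L. q l = R)"
    using line by blast
next
  assume L: "L \<in> lines W \<and> (\<forall>l\<in>L. q l = R)"
  have "p \<in> sing_points W R q" if p: "p \<in> points W" "p \<subseteq> L" for p
  proof -
    obtain w where w: "w \<in> V" "w \<noteq> zerov" "p = span W {w}"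
      using p unfolding points_def by blast
    then have "q w = R"
      using L p span_superset by blast
    then show ?thesis
      unfolding sing_points_def using w by blast
  qed
  then show "L \<in> sing_lines W R q"
    unfolding sing_lines_def using L by blast
qed

lemma orthogonal_singular_pair_line:
  assumes "x \<in> V" "y \<in> V" "q x = R" "q y = R" "f x y = 0"
    and "x \<noteq> zerov" "y \<notin> span W {x}"
  shows "span W {x, y} \<in> sing_lines W R q"
proof -
  have "span W {x, y} \<in> lines W"
    unfolding lines_def using assms by blast
  moreover have "\<forall>l\<in>span W {x, y}. q l = R"
    using assms by (auto simp: span_pair singular_combination cos_zero)
  ultimately show ?thesis
    by (simp add: sing_lines_iff)
qed

end

section \<open>Quotients by subspaces of the radical\<close>

locale radical_quotient = vs_quotient W U + gen_quadratic W \<sigma> \<epsilon> R q f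
  for W :: "('v, 'k::division_ring) vs" and U \<sigma> \<epsilon> R q f +
  assumes U_radical: "U \<subseteq> Radf W f"
    and U_meets_Radq: "U \<inter> Radq W R q f = {vzero W}"
begin

abbreviation "WQ \<equiv> quot W U"
abbreviation "RU \<equiv> R_U U q"
abbreviation "qU \<equiv> q_U U q"
abbreviation "fU \<equiv> f_U f"
abbreviation "phi \<equiv> (\<lambda>X. proj ` X)"

lemma f_radical_left: "u \<in> U \<Longrightarrow> y \<in> V \<Longrightarrow> f u y = 0"
  using U_radical unfolding Radf_def by auto

lemma f_radical_right: "u \<in> U \<Longrightarrow> y \<in> V \<Longrightarrow> f y u = 0"
  using f_hermitian[of u y] f_radical_left by (simp add: \<sigma>_simps)

lemma q_plus_radical:
  assumes "x \<in> V" "u \<in> U" "t \<in> q x" "s \<in> q u"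
  shows "q (plusv x u) = cos R (t + s)"
  using q_plus[of x u t s] f_radical_right assms by simp

text \<open>Since \<open>U \<inter> Rad(q) = 0\<close>, a coset of \<open>U\<close> contains at most one singular vector.\<close>
lemma singular_translate_unique:
  assumes "b \<in> V" "u \<in> U" "q b = R" "q (plusv b u) = R"
  shows "u = zerov"
proof -
  obtain s where s: "s \<in> q u"
    using q_nonempty assms(2) U_carrier by blast
  have "0 \<in> q b"
    using assms singular_iff by simp
  then have "q (plusv b u) = cos R (0 + s)"
    using q_plus_radical assms s by blast
  then have "cos R s = R"
    using assms(4) by simp
  then have "q u = R"
    using q_eq_cos[of u s] s assms cos_eq_self_iff[OF R_subgroup] by simp
  then have "u \<in> U \<inter> Radq W R q f"
    using assms U_radical unfolding Radq_def by blast
  then show ?thesis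
    using U_meets_Radq by blast
qed

lemma inj_on_singular: "inj_on proj {x \<in> V. q x = R}"
proof (rule inj_onI)
  fix x y assume "x \<in> {x \<in> V. q x = R}" "y \<in> {x \<in> V. q x = R}" and eq: "proj x = proj y"
  then have xy: "x \<in> V" "y \<in> V" "q y = R" "q x = R"
    by simp_all
  obtain u where u: "u \<in> U" "x = plusv y u"
    using coset_eq_iff[OF xy(1,2)] eq by blast
  then have "u = zerov"
    using singular_translate_unique[of y u] xy by simp
  then show "x = y"
    using u xy by simp
qed

lemma singular_proj_eq_U_iff:
  assumes "x \<in> V" "q x = R"
  shows "proj x = U \<longleftrightarrow> x = zerov"
proof -
  have "proj x = proj zerov \<longleftrightarrow> x = zerov"
    using assms q_zero by (intro inj_on_eq_iff[OF inj_on_singular]) simp_all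
  then show ?thesis
    by (simp add: coset_zero)
qed

text \<open>Values of \<open>q\<close> on \<open>U\<close> have order at most two modulo \<open>R\<close>, since
  \<open>0 = q(u - u) = q(u) + q(-u) = 2 q(u)\<close>.  This makes \<open>R_U = \<Union>q(U)\<close> a closed subgroup.\<close>
lemma R_U_double:
  assumes "u \<in> U" "a \<in> q u"
  shows "a + a \<in> R"
proof -
  have "a \<in> q (smulv u (-1))"
    using assms q_smul_minus_one by simp
  then have "q (plusv u (smulv u (-1))) = cos R (a + a)"
    using q_plus_radical assms by simp
  then have "cos R (a + a) = R"
    using plus_smul_minus_one q_zero assms by simp
  then show ?thesis
    using cos_eq_self_iff[OF R_subgroup] by blast
qed

lemma R_U_memI: "u \<in> U \<Longrightarrow> a \<in> q u \<Longrightarrow> a \<in> RU"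
  unfolding R_U_def by blast

lemma R_subset_R_U: "R \<subseteq> RU"
  using R_U_memI[of zerov] q_zero U_zero by blast

text \<open>\<open>R_U\<close> is a closed subgroup: closed under negation by \<open>R_U_double\<close>, under
  \<open>t \<mapsto> \<lambda>\<^sup>\<sigma> t \<lambda>\<close> and addition because \<open>q\<close> is additive on \<open>U\<close>.\<close>
lemma R_U_closed: "closed_sub \<sigma> \<epsilon> RU"
  unfolding closed_sub_def
proof (intro conjI ballI allI)
  show "0 \<in> RU"
    using R_subset_R_U R_subgroup unfolding add_subgroup_def by blast
  show "Kse \<sigma> \<epsilon> \<subseteq> RU"
    using R_subset_R_U R_closed unfolding closed_sub_def by blast
  fix a assume "a \<in> RU"
  then obtain u where u: "u \<in> U" "a \<in> q u"
    unfolding R_U_def by blast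
  have "- (a + a) \<in> R"
    using R_U_double[OF u] R_subgroup unfolding add_subgroup_def by blast
  moreover have "- (a + a) = - a - a"
    by simp
  ultimately have "- a - a \<in> R"
    by simp
  then have "- a \<in> q u"
    using q_eq_cos[of u a] u by (simp add: cos_mem_iff)
  then show "- a \<in> RU"
    using R_U_memI u by blast
  fix l
  have "\<sigma> l * a * l \<in> q (smulv u l)"
    using q_smul u cos_self R_subgroup by simp
  then show "\<sigma> l * a * l \<in> RU"
    using R_U_memI u U_smul by blast
next
  fix a b assume "a \<in> RU" "b \<in> RU"
  then obtain u v where u: "u \<in> U" "a \<in> q u" and v: "v \<in> U" "b \<in> q v"
    unfolding R_U_def by blast
  then have "a + b \<in> q (plusv u v)"
    using q_plus_radical cos_self R_subgroup by simp
  then show "a + b \<in> RU"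
    using R_U_memI u v U_plus by blast
qed

lemma R_U_subgroup: "add_subgroup RU"
  using R_U_closed by (rule closed_sub_add_subgroup)

lemma q_U_proj:
  assumes "x \<in> V" "t \<in> q x"
  shows "qU (proj x) = cos RU t"
proof -
  let ?t = "SOME t'. \<exists>x'\<in>proj x. t' \<in> q x'"
  have "\<exists>t'. \<exists>x'\<in>proj x. t' \<in> q x'"
    using assms coset_self by blast
  then have "\<exists>x'\<in>proj x. ?t \<in> q x'"
    by (rule someI_ex)
  then obtain u where u: "u \<in> U" "?t \<in> q (plusv x u)"
    unfolding coset_def by blast
  obtain s where s: "s \<in> q u"
    using q_nonempty U_carrier u(1) by blast
  have "?t - (t + s) \<in> RU"
    using q_plus_radical[OF assms(1) u(1) assms(2) s] u R_subset_R_U by (auto simp: cos_mem_iff)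
  moreover have "s \<in> RU"
    using R_U_memI u s by blast
  ultimately have "(?t - (t + s)) + s \<in> RU"
    using R_U_subgroup unfolding add_subgroup_def by blast
  then show ?thesis
    unfolding q_U_def using cos_eq_iff[OF R_U_subgroup] by simp
qed

text \<open>\<open>f_U\<close> is well defined, as \<open>f\<close> does not see the radical vectors in \<open>U\<close>.\<close>
lemma f_U_proj:
  assumes "x \<in> V" "y \<in> V"
  shows "fU (proj x) (proj y) = f x y"
proof -
  have "(SOME x'. x' \<in> proj x) \<in> proj x" "(SOME y'. y' \<in> proj y) \<in> proj y"
    using assms coset_self by (metis someI_ex)+
  then obtain u v where "u \<in> U" "v \<in> U"
    "(SOME x'. x' \<in> proj x) = plusv x u" "(SOME y'. y' \<in> proj y) = plusv y v"
    unfolding coset_def by blast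
  then show ?thesis
    unfolding f_U_def using assms by (simp add: f_plus_left f_plus_right f_radical_left f_radical_right)
qed

lemma q_U_eq_cos: "t \<in> qU C \<Longrightarrow> qU C = cos RU t"
  unfolding q_U_def using cos_of_mem R_U_subgroup by blast

lemma singular_coset_lift:
  assumes "x \<in> V" "qU (proj x) = RU"
  obtains v where "v \<in> V" "proj v = proj x" "q v = R"
proof -
  obtain t where t: "t \<in> q x"
    using q_nonempty assms by blast
  then have "t \<in> RU"
    using q_U_proj assms cos_eq_self_iff[OF R_U_subgroup] by simp
  then obtain u where u: "u \<in> U" "t \<in> q u"
    unfolding R_U_def by blast
  have "t \<in> q (smulv u (-1))"
    using u q_smul_minus_one by simp
  then have "q (plusv x (smulv u (-1))) = cos R (t + t)"
    using q_plus_radical assms t u by simp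
  then have "q (plusv x (smulv u (-1))) = R"
    using R_U_double[OF u] cos_eq_self_iff[OF R_subgroup] by simp
  moreover have "proj (plusv x (smulv u (-1))) = proj x"
    using coset_shift assms u by simp
  moreover have "plusv x (smulv u (-1)) \<in> V"
    using assms u by simp
  ultimately show ?thesis
    using that by blast
qed

lemma q_U_singular: "x \<in> V \<Longrightarrow> q x = R \<Longrightarrow> qU (proj x) = RU"
  using q_U_proj[of x 0] singular_iff cos_zero by simp

lemma trace_valued_sesq_quot: "trace_valued_sesq WQ \<sigma> \<epsilon> fU"
  unfolding trace_valued_sesq_def Let_def quot_carrier
proof (intro conjI ballI allI; elim imageE; hypsubst)
  fix x y z assume xyz: "x \<in> V" "y \<in> V" "z \<in> V"
  show "fU (vadd WQ (proj x) (proj y)) (proj z) = fU (proj x) (proj z) + fU (proj y) (proj z)"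
    using xyz by (simp add: quot_plus f_U_proj f_plus_left)
  show "fU (proj x) (vadd WQ (proj y) (proj z)) = fU (proj x) (proj y) + fU (proj x) (proj z)"
    using xyz by (simp add: quot_plus f_U_proj f_plus_right)
next
  fix x y a b assume xy: "x \<in> V" "y \<in> V"
  show "fU (vsmul WQ (proj x) a) (vsmul WQ (proj y) b) = \<sigma> a * fU (proj x) (proj y) * b"
    using xy by (simp add: quot_smul f_U_proj f_smul)
  show "fU (proj y) (proj x) = \<sigma> (fU (proj x) (proj y)) * \<epsilon>"
    using xy f_hermitian[OF xy] by (simp only: f_U_proj)
next
  fix x assume "x \<in> V"
  then show "\<exists>t. fU (proj x) (proj x) = t + \<sigma> t * \<epsilon>"
    using f_trace by (simp add: f_U_proj)
qed

lemma gen_quad_form_quot: "gen_quad_form WQ \<sigma> \<epsilon> RU qU fU"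
proof -
  have ball_proj: "(\<forall>X\<in>proj ` V. P X) \<longleftrightarrow> (\<forall>x\<in>V. P (proj x))" for P
    by blast
  have q_U_smul: "qU (vsmul WQ (proj x) l) = cos RU (\<sigma> l * t * l)"
    if x: "x \<in> V" "t \<in> qU (proj x)" for x l t
  proof -
    obtain t0 where t0: "t0 \<in> q x"
      using q_nonempty x by blast
    have "q (smulv x l) = cos R (\<sigma> l * t0 * l)"
      by (rule q_smul[OF x(1) t0])
    then have "\<sigma> l * t0 * l \<in> q (smulv x l)"
      using cos_self[OF R_subgroup] by simp
    then have "qU (proj (smulv x l)) = cos RU (\<sigma> l * t0 * l)"
      by (rule q_U_proj[OF smul_in[OF x(1)]])
    also have "\<dots> = cos RU (\<sigma> l * t * l)"
      using cos_cong_closed_mult[OF R_U_closed] q_U_proj[OF x(1) t0] q_U_eq_cos[OF x(2)]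
      by metis
    finally show ?thesis
      using x by (simp add: quot_smul)
  qed
  have q_U_plus: "qU (vadd WQ (proj x) (proj y)) = cos RU (t + s + fU (proj x) (proj y))"
    if xy: "x \<in> V" "y \<in> V" "t \<in> qU (proj x)" "s \<in> qU (proj y)" for x y t s
  proof -
    obtain t0 s0 where t0: "t0 \<in> q x" and s0: "s0 \<in> q y"
      using q_nonempty xy by metis
    have "q (plusv x y) = cos R (t0 + s0 + f x y)"
      by (rule q_plus[OF xy(1,2) t0 s0])
    then have "t0 + s0 + f x y \<in> q (plusv x y)"
      using cos_self[OF R_subgroup] by simp
    then have "qU (proj (plusv x y)) = cos RU (t0 + s0 + f x y)"
      by (rule q_U_proj[OF plus_in[OF xy(1,2)]])
    also have "\<dots> = cos RU (t + s + f x y)"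
      using cos_cong_plus[OF R_U_subgroup] q_U_proj[OF xy(1) t0] q_U_eq_cos[OF xy(3)]
        q_U_proj[OF xy(2) s0] q_U_eq_cos[OF xy(4)]
      by metis
    finally show ?thesis
      using xy by (simp add: quot_plus f_U_proj)
  qed
  have "\<exists>t. qU C = cos RU t" for C
    unfolding q_U_def by blast
  then show ?thesis
    unfolding gen_quad_form_def quot_carrier ball_proj
    using rvs_quot admissible R_U_closed trace_valued_sesq_quot q_U_smul q_U_plus
    by simp
qed

end

sublocale radical_quotient \<subseteq> Q2: gen_quadratic "quot W U" \<sigma> \<epsilon> "R_U U q" "q_U U q" "f_U f"
  by (rule gen_quadratic.intro, rule gen_quad_form_quot)

lemma geom_iso_onto_image:
  assumes inj: "inj_on f S" and sub: "\<forall>X \<in> fst G \<union> snd G. X \<subseteq> S"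
  shows "geom_iso (\<lambda>X. f ` X) G ((\<lambda>X. f ` X) ` fst G, (\<lambda>X. f ` X) ` snd G)"
proof -
  have "fst G \<subseteq> Pow S" "snd G \<subseteq> Pow S"
    using sub by auto
  then have "inj_on (\<lambda>X. f ` X) (fst G)" "inj_on (\<lambda>X. f ` X) (snd G)"
    using inj_on_image_Pow[OF inj] inj_on_subset by blast+
  moreover have "p \<subseteq> L \<longleftrightarrow> f ` p \<subseteq> f ` L" if "p \<subseteq> S" "L \<subseteq> S" for p L
    using that inj unfolding inj_on_def by blast
  ultimately show ?thesis
    unfolding geom_iso_def bij_betw_def using sub by simp
qed

context radical_quotient
begin

lemma sing_lines_singular: "L \<in> sing_lines W R q \<Longrightarrow> L \<subseteq> {x \<in> V. q x = R}"
  using sing_lines_iff lines_subspace subspace_carrier by blast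

text \<open>Since the projection is injective on singular vectors, \<open>S_q\<close> is isomorphic to its image.\<close>
lemma S_q_iso_image: "geom_iso phi (S_q W R q) (phi ` sing_points W R q, phi ` sing_lines W R q)"
proof -
  have "\<forall>X \<in> sing_points W R q \<union> sing_lines W R q. X \<subseteq> {x \<in> V. q x = R}"
    using sing_points_singular sing_lines_singular by blast
  then show ?thesis
    using geom_iso_onto_image[OF inj_on_singular, of "S_q W R q"] unfolding S_q_def by simp
qed

lemma proj_sing_points: "phi ` sing_points W R q = sing_points WQ RU qU"
proof (intro equalityI subsetI)
  fix P' assume "P' \<in> phi ` sing_points W R q"
  then obtain x where x: "x \<in> V" "x \<noteq> zerov" "q x = R" "P' = phi (span W {x})"
    unfolding sing_points_def by blast
  then have "proj x \<noteq> U" "qU (proj x) = RU" "P' = span WQ {proj x}"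
    using singular_proj_eq_U_iff q_U_singular proj_span_single by simp_all
  then show "P' \<in> sing_points WQ RU qU"
    unfolding sing_points_def using x by auto
next
  fix P' assume "P' \<in> sing_points WQ RU qU"
  then obtain x where x: "x \<in> V" "proj x \<noteq> U" "qU (proj x) = RU" "P' = span WQ {proj x}"
    unfolding sing_points_def by auto
  then obtain v where v: "v \<in> V" "proj v = proj x" "q v = R"
    using singular_coset_lift by blast
  then have "v \<noteq> zerov"
    using x coset_zero by auto
  then have "span W {v} \<in> sing_points W R q"
    unfolding sing_points_def using v by blast
  moreover have "phi (span W {v}) = P'"
    using proj_span_single v x by simp
  ultimately show "P' \<in> phi ` sing_points W R q"
    by blast
qed

text \<open>The image of a singular line is a line, as the projection is injective on it.\<close>
lemma proj_sing_line_is_line: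
  assumes L: "L \<in> sing_lines W R q"
  shows "phi L \<in> lines WQ"
proof -
  obtain x y where xy: "x \<in> V" "y \<in> V" "x \<noteq> zerov" "y \<notin> span W {x}" "L = span W {x, y}"
    using L unfolding sing_lines_def lines_def by blast
  have sing: "L \<subseteq> {x \<in> V. q x = R}"
    using sing_lines_singular L by blast
  have L_subspace: "subspace W L"
    using L sing_lines_iff lines_subspace by blast
  have "x \<in> L" "y \<in> L"
    using xy span_superset by blast+
  then have x_sing: "x \<in> {x \<in> V. q x = R}" and y_sing: "y \<in> {x \<in> V. q x = R}"
    and "span W {x} \<subseteq> {x \<in> V. q x = R}"
    using sing span_least[OF L_subspace] by blast+
  then have "proj y \<in> proj ` span W {x} \<longleftrightarrow> y \<in> span W {x}"
    by (intro inj_on_image_mem_iff[OF inj_on_singular])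
  then have "proj y \<notin> span WQ {proj x}"
    using xy(4) proj_span_single[OF xy(1)] by simp
  moreover have "proj x \<noteq> U"
    using singular_proj_eq_U_iff x_sing xy(3) by simp
  moreover have "phi L = span WQ {proj x, proj y}" "proj x \<in> vcarrier WQ" "proj y \<in> vcarrier WQ"
    using proj_span_pair xy by simp_all
  ultimately show ?thesis
    unfolding lines_def quot_zero by blast
qed

lemma proj_sing_lines:
  assumes "R \<noteq> UNIV"
  shows "phi ` sing_lines W R q =
    {L' \<in> lines WQ. (\<forall>C\<in>L'. qU C = RU) \<and> (\<forall>C\<in>L'. \<forall>D\<in>L'. fU C D = 0)}"
proof (intro equalityI subsetI)
  fix L' assume "L' \<in> phi ` sing_lines W R q"
  then obtain L where L: "L \<in> sing_lines W R q" "L' = phi L"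
    by blast
  have sing: "L \<subseteq> {x \<in> V. q x = R}"
    using sing_lines_singular L by blast
  have L_subspace: "subspace W L" and L_sing: "\<forall>v\<in>L. q v = R"
    using L sing_lines_iff lines_subspace by blast+
  have "fU (proj l) (proj l') = 0" if "l \<in> L" "l' \<in> L" for l l'
  proof -
    have "l \<in> V" "l' \<in> V"
      using sing that by auto
    then show ?thesis
      using f_vanishes_on_singular_subspace[OF L_subspace L_sing assms that] f_U_proj by simp
  qed
  then show "L' \<in> {L' \<in> lines WQ. (\<forall>C\<in>L'. qU C = RU) \<and> (\<forall>C\<in>L'. \<forall>D\<in>L'. fU C D = 0)}"
    using proj_sing_line_is_line L sing q_U_singular by auto
next
  fix L' assume L': "L' \<in> {L' \<in> lines WQ. (\<forall>C\<in>L'. qU C = RU) \<and> (\<forall>C\<in>L'. \<forall>D\<in>L'. fU C D = 0)}"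
  then obtain x y where xy: "x \<in> V" "y \<in> V" "proj x \<noteq> U" "proj y \<notin> span WQ {proj x}"
    "L' = span WQ {proj x, proj y}"
    unfolding lines_def by auto
  then have "proj x \<in> L'" "proj y \<in> L'"
    using Q.span_superset by blast+
  then have "qU (proj x) = RU" "qU (proj y) = RU" "fU (proj x) (proj y) = 0"
    using L' by blast+
  then obtain x' y' where x': "x' \<in> V" "proj x' = proj x" "q x' = R"
    and y': "y' \<in> V" "proj y' = proj y" "q y' = R"
    using singular_coset_lift xy by metis
  have "f x' y' = 0"
    using f_U_proj x' y' \<open>fU (proj x) (proj y) = 0\<close> by metis
  moreover have "x' \<noteq> zerov"
    using xy x' coset_zero by auto
  moreover have "y' \<notin> span W {x'}"
  proof
    assume "y' \<in> span W {x'}"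
    then have "proj y \<in> span WQ {proj x}"
      using proj_span_single[OF x'(1)] x'(2) y'(2) by (metis image_eqI)
    then show False
      using xy by blast
  qed
  ultimately have "span W {x', y'} \<in> sing_lines W R q"
    using orthogonal_singular_pair_line x' y' by blast
  moreover have "phi (span W {x', y'}) = L'"
    using proj_span_pair x' y' xy by simp
  ultimately show "L' \<in> phi ` sing_lines W R q"
    by blast
qed

text \<open>If \<open>q_U\<close> is non-trivial, its singular lines are the lines of singular vectors, on which
  \<open>f_U\<close> vanishes automatically; so \<open>S_{q_U}\<close> is the image of \<open>S_q\<close>.\<close>
lemma iso_nontrivial_case:
  assumes "\<not> qtrivial WQ RU qU"
  shows "geom_iso phi (S_q W R q) (S_q WQ RU qU)"
proof -
  have RU: "RU \<noteq> UNIV"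
    using assms Q2.qtrivial_if_R_UNIV by blast
  then have "R \<noteq> UNIV"
    using R_subset_R_U by blast
  have "sing_lines WQ RU qU =
      {L' \<in> lines WQ. (\<forall>C\<in>L'. qU C = RU) \<and> (\<forall>C\<in>L'. \<forall>D\<in>L'. fU C D = 0)}"
    using Q2.sing_lines_iff Q2.f_vanishes_on_singular_subspace[OF Q.lines_subspace _ RU] by auto
  then have "S_q WQ RU qU = (phi ` sing_points W R q, phi ` sing_lines W R q)"
    unfolding S_q_def using proj_sing_points proj_sing_lines[OF \<open>R \<noteq> UNIV\<close>] by simp
  then show ?thesis
    using S_q_iso_image by simp
qed

text \<open>If \<open>q_U\<close> is trivial, every vector is congruent mod \<open>U\<close> to a singular one, so \<open>f\<close>
  is alternating.\<close>
lemma alternating_if_trivial: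
  assumes "qtrivial WQ RU qU" "R \<noteq> UNIV"
  shows "alternating W f"
  unfolding alternating_def
proof
  fix x assume x: "x \<in> V"
  then have "qU (proj x) = RU"
    using assms unfolding qtrivial_def by simp
  then obtain v where v: "v \<in> V" "proj v = proj x" "q v = R"
    using singular_coset_lift x by blast
  then have "f x x = f v v"
    using f_U_proj x by metis
  then show "f x x = 0"
    using singular_isotropic v assms by simp
qed

lemma alternating_quot: "alternating W f \<Longrightarrow> alternating WQ fU"
  unfolding alternating_def by (auto simp: f_U_proj)

lemma iso_trivial_case:
  assumes triv: "qtrivial WQ RU qU" and "R \<noteq> UNIV"
  shows "geom_iso phi (S_q W R q) (S_f WQ fU)"
proof -
  have sing: "\<forall>C\<in>vcarrier WQ. qU C = RU"
    using triv unfolding qtrivial_def by blast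
  have iso: "\<forall>C\<in>vcarrier WQ. fU C C = 0"
    using alternating_quot[OF alternating_if_trivial[OF assms]] unfolding alternating_def by blast
  have "fst (S_f WQ fU) = sing_points WQ RU qU"
    unfolding S_f_def sing_points_def using sing iso by auto
  moreover have "\<forall>C\<in>L'. qU C = RU" if "L' \<in> lines WQ" for L'
    using Q.subspace_carrier[OF Q.lines_subspace[OF that]] sing by blast
  then have "snd (S_f WQ fU) =
      {L' \<in> lines WQ. (\<forall>C\<in>L'. qU C = RU) \<and> (\<forall>C\<in>L'. \<forall>D\<in>L'. fU C D = 0)}"
    unfolding S_f_def by auto
  ultimately have "S_f WQ fU = (phi ` sing_points W R q, phi ` sing_lines W R q)"
    using proj_sing_points proj_sing_lines[OF \<open>R \<noteq> UNIV\<close>] by (simp add: prod_eq_iff)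
  then show ?thesis
    using S_q_iso_image by simp
qed

end

theorem mainTheorem14:
  fixes W :: "('v, 'k::division_ring) vs"
    and \<sigma> :: "'k \<Rightarrow> 'k" and \<epsilon> :: 'k and R :: "'k set"
    and q :: "'v \<Rightarrow> 'k set" and f :: "'v \<Rightarrow> 'v \<Rightarrow> 'k" and U :: "'v set"
  assumes gqf: "gen_quad_form W \<sigma> \<epsilon> R q f"
    and nontriv: "\<not> qtrivial W R q"
    and spans: "span W (\<Union> (sing_points W R q)) = vcarrier W"
    and U_sub: "subspace W U"
    and U_rad: "U \<subseteq> Radf W f"
    and U_int: "U \<inter> Radq W R q f = {vzero W}"
  shows "(\<forall>x\<in>vcarrier W. \<forall>t\<in>q x. q_U U q (coset W U x) = cos (R_U U q) t)
       \<and> (\<forall>x\<in>vcarrier W. \<forall>y\<in>vcarrier W. f_U f (coset W U x) (coset W U y) = f x y)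
       \<and> gen_quad_form (quot W U) \<sigma> \<epsilon> (R_U U q) (q_U U q) (f_U f)
       \<and> (\<not> qtrivial (quot W U) (R_U U q) (q_U U q) \<longrightarrow>
            geom_iso (\<lambda>X. coset W U ` X) (S_q W R q) (S_q (quot W U) (R_U U q) (q_U U q)))
       \<and> (qtrivial (quot W U) (R_U U q) (q_U U q) \<longrightarrow>
            alternating W f \<and> alternating (quot W U) (f_U f) \<and>
            geom_iso (\<lambda>X. coset W U ` X) (S_q W R q) (S_f (quot W U) (f_U f)))"
proof -
  interpret gen_quadratic W \<sigma> \<epsilon> R q f
    using gqf by (rule gen_quadratic.intro)
  interpret radical_quotient W U \<sigma> \<epsilon> R q f
    using U_sub U_rad U_int
    by unfold_locales
  have R_proper: "R \<noteq> UNIV"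
    using nontriv qtrivial_if_R_UNIV by blast
  show ?thesis
    using q_U_proj f_U_proj gen_quad_form_quot iso_nontrivial_case
      alternating_if_trivial[OF _ R_proper] alternating_quot iso_trivial_case[OF _ R_proper]
    by blast
qed

end
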